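(* Let $p>1$, $s\ge r\ge2$, let $Q$ be an $s$-vertex $r$-graph and let $H$ be an $n$-vertex $r$-graph ($n\ge s$) with $\lambda=\lambda^{(p)}(Q,H)$ and minimum $Q$-degree $\delta=\delta_Q(H)$. Let $\mathbf x$ be a principal $Q$-eigenvector of $H$. Then $$\Big(\frac{\lambda\,(\mathbf x_{\min})^{p-1}}{(s-1)!}\Big)^{p}\le\frac{s!\binom{n}{s-1}\delta^{p-1}}{n^{s-1}}-\Big(s!\tbinom{n}{s-1}\delta^{p-1}-\delta^{p}\Big)(\mathbf x_{\min})^{p(s-1)}.$$
   Context: An $r$-graph ($r\ge 2$) is a finite hypergraph all of whose edges have exactly $r$ vertices. For $I\subseteq V(H)$, $H[I]$ denotes the induced subhypergraph on $I$. For an $s$-vertex $r$-graph $Q$ and an $r$-graph $H$, $\mathcal N(Q,H)$ is the number of (not necessarily induced) subgraphs of $H$ isomorphic to $Q$. For an $n$-vertex $r$-graph $H$ with vertex set $[n]$ and $\mathbf x\in\mathbb R^n$, $P_{Q,H}(\mathbf x)=s!\sum_{\{i_1,\dots,i_s\}\in\binom{[n]}{s}}\mathcal N(Q,H[\{i_1,\dots,i_s\}])\,x_{i_1}\cdots x_{i_s}$, and for $p\ge1$, $\lambda^{(p)}(Q,H)=\max_{\|\mathbf x\|_p=1}P_{Q,H}(\mathbf x)$. A principal $Q$-eigenvector of $H$ is a nonnegative vector $\mathbf x$ with $\|\mathbf x\|_p=1$ and $P_{Q,H}(\mathbf x)=\lambda^{(p)}(Q,H)$; $\mathbf x_{\min}$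 denotes its smallest entry. The $Q$-degree of a vertex $v$ is $d_{Q,H}(v)=\sum\mathcal N(Q,H[I])$, the sum over all $s$-subsets $I\subseteq V(H)$ containing $v$; $\delta_Q(H)$ is the minimum $Q$-degree over all vertices. *)

theory Defs
  imports Complex_Main
begin

text \<open>An r-graph is represented by its vertex set V and edge set E (a set of r-subsets of V).
  The host graph H has vertex set {..<n}; the pattern Q has vertex set {..<s}.\<close>

definition is_rgraph :: "nat \<Rightarrow> 'a set \<Rightarrow> 'a set set \<Rightarrow> bool" where
  "is_rgraph r V E \<longleftrightarrow> finite V \<and> (\<forall>e\<in>E. e \<subseteq> V \<and> card e = r)"

definition induced_edges :: "'a set set \<Rightarrow> 'a set \<Rightarrow> 'a set set" where
  "induced_edges E I = {e \<in> E. e \<subseteq> I}"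

text \<open>Number of (not necessarily induced) subgraphs (V',E') of the hypergraph (V,E)
  isomorphic to the s-vertex r-graph Q = ({..<s}, EQ).\<close>
definition num_copies :: "nat \<Rightarrow> nat set set \<Rightarrow> 'a set \<Rightarrow> 'a set set \<Rightarrow> nat" where
  "num_copies s EQ V E = card {(V', E'). V' \<subseteq> V \<and> E' \<subseteq> E \<and> (\<forall>e\<in>E'. e \<subseteq> V') \<and>
      (\<exists>f. bij_betw f {..<s} V' \<and> E' = (\<lambda>e. f ` e) ` EQ)}"

definition Qpoly :: "nat \<Rightarrow> nat set set \<Rightarrow> nat \<Rightarrow> nat set set \<Rightarrow> (nat \<Rightarrow> real) \<Rightarrow> real" where
  "Qpoly s EQ n EH x = fact s * (\<Sum>I\<in>{I. I \<subseteq> {..<n} \<and> card I = s}.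
      real (num_copies s EQ I (induced_edges EH I)) * (\<Prod>i\<in>I. x i))"

definition pnorm :: "real \<Rightarrow> nat \<Rightarrow> (nat \<Rightarrow> real) \<Rightarrow> real" where
  "pnorm p n x = (\<Sum>i<n. \<bar>x i\<bar> powr p) powr (1 / p)"

text \<open>The p-spectral radius \<lambda>^{(p)}(Q,H) (maximum over the unit p-sphere in R^n;
  entries of x outside {..<n} do not influence Qpoly).\<close>
definition Qlambda :: "real \<Rightarrow> nat \<Rightarrow> nat set set \<Rightarrow> nat \<Rightarrow> nat set set \<Rightarrow> real" where
  "Qlambda p s EQ n EH = (SUP x\<in>{x. pnorm p n x = 1}. Qpoly s EQ n EH x)"

definition principal_Qeigvec :: "real \<Rightarrow> nat \<Rightarrow> nat set set \<Rightarrow> nat \<Rightarrow> nat set set \<Rightarrow> (nat \<Rightarrow> real) \<Rightarrow> bool" where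
  "principal_Qeigvec p s EQ n EH x \<longleftrightarrow> (\<forall>i<n. 0 \<le> x i) \<and> pnorm p n x = 1 \<and>
      Qpoly s EQ n EH x = Qlambda p s EQ n EH"

definition Qdegree :: "nat \<Rightarrow> nat set set \<Rightarrow> nat \<Rightarrow> nat set set \<Rightarrow> nat \<Rightarrow> nat" where
  "Qdegree s EQ n EH v = (\<Sum>I\<in>{I. I \<subseteq> {..<n} \<and> card I = s \<and> v \<in> I}.
      num_copies s EQ I (induced_edges EH I))"

definition min_Qdegree :: "nat \<Rightarrow> nat set set \<Rightarrow> nat \<Rightarrow> nat set set \<Rightarrow> nat" where
  "min_Qdegree s EQ n EH = Min (Qdegree s EQ n EH ` {..<n})"

end

theory Submission
  imports Defs "HOL-Analysis.Convex"
begin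

(* Let m be the least entry of the principal eigenvector x and u a vertex of minimum Q-degree
   delta. If m = 0 the left side vanishes. Otherwise x is an interior maximiser and the Lagrange
   condition in the coordinate u reads lambda x_u^(p-1) = (s-1)! D_u(x), where s! D_u is the
   partial derivative of P_{Q,H} in x_u. The power mean inequality gives
   D_u(x)^p <= delta^(p-1) D_u(y) for y_i = x_i^p, a probability vector with entries at least m^p.
   As every s-set carries at most s! copies of Q, D_u(y) is at most s! e_{s-1}(y on V - u) minus
   (s! C(n-1,s-1) - delta) m^(p(s-1)), and Maclaurin's inequality e_{s-1}(y) <= C(n,s-1)/n^(s-1)
   together with e_{s-1}(y) = e_{s-1}(y on V - u) + y_u e_{s-2}(y on V - u) bounds the first term. *)

lemma powr_tangent_line_le:
  fixes p z w :: real
  assumes "p > 1" "z \<ge> 0" "w \<ge> 0"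
  shows "p * w powr (p - 1) * z \<le> z powr p + (p - 1) * w powr p"
proof -
  define q where "q = p / (p - 1)"
  have q: "q > 1" "1 / p + 1 / q = 1"
    using assms by (auto simp: q_def field_simps)
  have "z * w powr (p - 1) \<le> z powr p / p + (w powr (p - 1)) powr q / q"
    using Youngs_inequality[OF assms(1) q assms(2)] by simp
  also have "(w powr (p - 1)) powr q = w powr p"
    using assms by (simp add: powr_powr q_def)
  finally show ?thesis
    using assms by (simp add: q_def field_simps)
qed

lemma powr_diff_one_mult:
  fixes w p :: real
  assumes "w \<ge> 0"
  shows "w powr (p - 1) * w = w powr p"
  using powr_mult_base[OF assms, of "p - 1"] by (simp add: mult.commute)

lemma power_mean_inequality:
  fixes c z :: "'a \<Rightarrow> real"
  assumes "finite A" "p > 1" "\<And>i. i \<in> A \<Longrightarrow> c i \<ge> 0" "\<And>i. i \<in> A \<Longrightarrow> z i \<ge> 0"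
  shows "(\<Sum>i\<in>A. c i * z i) powr p \<le> (\<Sum>i\<in>A. c i) powr (p - 1) * (\<Sum>i\<in>A. c i * z i powr p)"
proof -
  define C where "C = (\<Sum>i\<in>A. c i)"
  define T where "T = (\<Sum>i\<in>A. c i * z i)"
  define U where "U = (\<Sum>i\<in>A. c i * z i powr p)"
  have "C \<ge> 0" "T \<ge> 0"
    using assms by (auto simp: C_def T_def sum_nonneg)
  show ?thesis
  proof (cases "C = 0")
    case True
    then have "\<forall>i\<in>A. c i = 0"
      using assms by (simp add: C_def sum_nonneg_eq_0_iff)
    then show ?thesis by simp
  next
    case False
    then have "C > 0" using \<open>C \<ge> 0\<close> by simp
    \<comment> \<open>Sum the tangent-line inequality at the weighted mean w against the weights c.\<close>
    define w where "w = T / C"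
    have "w \<ge> 0" using \<open>T \<ge> 0\<close> \<open>C > 0\<close> by (simp add: w_def)
    have "(\<Sum>i\<in>A. c i * (p * w powr (p - 1) * z i)) \<le> (\<Sum>i\<in>A. c i * (z i powr p + (p - 1) * w powr p))"
      by (intro sum_mono mult_left_mono powr_tangent_line_le) (use assms \<open>w \<ge> 0\<close> in auto)
    moreover have "(\<Sum>i\<in>A. c i * (p * w powr (p - 1) * z i)) = p * w powr (p - 1) * T"
      by (simp add: T_def sum_distrib_left mult_ac)
    moreover have "(\<Sum>i\<in>A. c i * (z i powr p + (p - 1) * w powr p)) = U + C * ((p - 1) * w powr p)"
      by (simp add: U_def C_def sum.distrib distrib_left sum_distrib_right)
    ultimately have "p * (w powr (p - 1) * T) \<le> U + (p - 1) * (w powr p * C)"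
      by (simp add: mult_ac)
    moreover have T_eq: "T = C * w"
      using \<open>C > 0\<close> by (simp add: w_def)
    then have "w powr (p - 1) * T = w powr p * C"
      using powr_diff_one_mult[OF \<open>w \<ge> 0\<close>] by (simp add: mult_ac)
    ultimately have "C * w powr p \<le> U"
      by (simp add: left_diff_distrib mult.commute)
    have "T powr p = C powr p * w powr p"
      using \<open>C > 0\<close> \<open>w \<ge> 0\<close> by (simp add: T_eq powr_mult)
    also have "\<dots> = C powr (p - 1) * (C * w powr p)"
      using powr_diff_one_mult[of C p] \<open>C > 0\<close> by (simp add: mult_ac)
    also have "\<dots> \<le> C powr (p - 1) * U"
      by (intro mult_left_mono \<open>C * w powr p \<le> U\<close>) simp
    finally show ?thesis by (simp add: T_def C_def U_def)
  qed
qed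

lemma power_tangent_line_le:
  fixes a h :: real
  assumes "a \<ge> 0" "a + h \<ge> 0"
  shows "a ^ k * (a + real (Suc k) * h) \<le> (a + h) ^ Suc k"
proof (cases "a = 0")
  case True
  then show ?thesis using assms by (cases k) simp_all
next
  case False
  then have "a > 0" using assms by simp
  have "1 + real (Suc k) * (h / a) \<le> (1 + h / a) ^ Suc k"
    by (rule Bernoulli_inequality) (use assms \<open>a > 0\<close> in \<open>simp add: field_simps\<close>)
  then have "a ^ Suc k * (1 + real (Suc k) * (h / a)) \<le> a ^ Suc k * (1 + h / a) ^ Suc k"
    using \<open>a > 0\<close> by simp
  also have "\<dots> = (a + h) ^ Suc k"
    using \<open>a > 0\<close> by (simp flip: power_mult_distrib add: field_simps)
  finally have "a ^ Suc k * (1 + real (Suc k) * (h / a)) \<le> (a + h) ^ Suc k" .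
  moreover have "a ^ Suc k * (1 + real (Suc k) * (h / a)) = a ^ k * (a + real (Suc k) * h)"
    using \<open>a > 0\<close> by (simp add: field_simps)
  ultimately show ?thesis
    by linarith
qed

text \<open>The induction step of Maclaurin's inequality: a is the mean of n old values, t the new one.\<close>

lemma maclaurin_step:
  fixes a t :: real
  assumes "a \<ge> 0" "t \<ge> 0"
  shows "real (n choose Suc j) * a ^ Suc j + t * (real (n choose j) * a ^ j)
     \<le> real (Suc n choose Suc j) * ((real n * a + t) / real (Suc n)) ^ Suc j"
proof -
  define h where "h = (t - a) / real (Suc n)"
  have mean: "a + h = (real n * a + t) / real (Suc n)"
    by (simp add: h_def field_simps)
  have pascal: "real (Suc n choose Suc j) = real (n choose Suc j) + real (n choose j)"
    by simp
  have absorption: "real (Suc j) * real (Suc n choose Suc j) = real (Suc n) * real (n choose j)"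
    using Suc_times_binomial_eq[of n j] by (metis mult.commute of_nat_mult)
  have "real (Suc n choose Suc j) * (a ^ j * (a + real (Suc j) * h))
      = real (Suc n choose Suc j) * a ^ Suc j + a ^ j * (real (Suc j) * real (Suc n choose Suc j) * h)"
    by (simp add: algebra_simps)
  also have "\<dots> = real (Suc n choose Suc j) * a ^ Suc j + a ^ j * (real (n choose j) * (t - a))"
    unfolding absorption by (simp add: h_def)
  also have "\<dots> = real (n choose Suc j) * a ^ Suc j + t * (real (n choose j) * a ^ j)"
    unfolding pascal by (simp add: algebra_simps)
  finally have "real (n choose Suc j) * a ^ Suc j + t * (real (n choose j) * a ^ j)
      = real (Suc n choose Suc j) * (a ^ j * (a + real (Suc j) * h))" ..
  also have "\<dots> \<le> real (Suc n choose Suc j) * (a + h) ^ Suc j"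
    using assms by (intro mult_left_mono power_tangent_line_le) (simp_all add: mean)
  finally show ?thesis unfolding mean .
qed

definition esym :: "'a set \<Rightarrow> nat \<Rightarrow> ('a \<Rightarrow> real) \<Rightarrow> real" where
  "esym V k y = (\<Sum>J\<in>{J. J \<subseteq> V \<and> card J = k}. \<Prod>j\<in>J. y j)"

lemma bij_betw_insert_subsets:
  assumes "finite V" "u \<in> V"
  shows "bij_betw (insert u) {J. J \<subseteq> V - {u} \<and> card J = k} {I. I \<subseteq> V \<and> card I = Suc k \<and> u \<in> I}"
proof (rule bij_betw_byWitness[where f' = "\<lambda>I. I - {u}"])
  show "insert u ` {J. J \<subseteq> V - {u} \<and> card J = k} \<subseteq> {I. I \<subseteq> V \<and> card I = Suc k \<and> u \<in> I}"
    using assms finite_subset by (fastforce simp: card_insert_if)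
  show "(\<lambda>I. I - {u}) ` {I. I \<subseteq> V \<and> card I = Suc k \<and> u \<in> I} \<subseteq> {J. J \<subseteq> V - {u} \<and> card J = k}"
    using assms finite_subset by fastforce
qed auto

lemma sum_subsets_containing:
  assumes "finite V" "u \<in> V"
  shows "(\<Sum>I\<in>{I. I \<subseteq> V \<and> card I = Suc k \<and> u \<in> I}. f I)
     = (\<Sum>J\<in>{J. J \<subseteq> V - {u} \<and> card J = k}. f (insert u J))"
  by (rule sum.reindex_bij_betw[OF bij_betw_insert_subsets[OF assms], symmetric])

lemma esym_0: "finite V \<Longrightarrow> esym V 0 y = 1"
proof -
  assume "finite V"
  then have "{J. J \<subseteq> V \<and> card J = 0} = {{}}"
    using finite_subset by fastforce
  then show ?thesis by (simp add: esym_def)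
qed

lemma esym_insert:
  assumes "finite F" "v \<notin> F"
  shows "esym (insert v F) (Suc j) y = esym F (Suc j) y + y v * esym F j y"
proof -
  let ?S = "{J. J \<subseteq> insert v F \<and> card J = Suc j}"
  have "finite ?S"
    using assms by (simp add: finite_subset[of _ "Pow (insert v F)"] subset_eq)
  then have "esym (insert v F) (Suc j) y
      = (\<Sum>J\<in>?S \<inter> {J. v \<in> J}. \<Prod>i\<in>J. y i) + (\<Sum>J\<in>?S - {J. v \<in> J}. \<Prod>i\<in>J. y i)"
    unfolding esym_def by (rule sum.Int_Diff)
  also have "?S - {J. v \<in> J} = {J. J \<subseteq> F \<and> card J = Suc j}"
    using assms by blast
  also have "(\<Sum>J\<in>?S \<inter> {J. v \<in> J}. \<Prod>i\<in>J. y i)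
      = (\<Sum>J\<in>{J. J \<subseteq> F \<and> card J = j}. \<Prod>i\<in>insert v J. y i)"
    using sum_subsets_containing[of "insert v F" v "\<lambda>J. \<Prod>i\<in>J. y i" j] assms
    by (simp add: Int_def conj_ac)
  also have "\<dots> = y v * esym F j y"
    unfolding esym_def sum_distrib_left
  proof (intro sum.cong refl)
    fix J assume "J \<in> {J. J \<subseteq> F \<and> card J = j}"
    then have "finite J" "v \<notin> J"
      using assms finite_subset by auto
    then show "(\<Prod>i\<in>insert v J. y i) = y v * (\<Prod>i\<in>J. y i)"
      by simp
  qed
  finally show ?thesis by (simp add: esym_def add.commute)
qed

lemma esym_ge_choose_mult_power:
  assumes "finite V" "\<And>i. i \<in> V \<Longrightarrow> \<mu> \<le> y i" "\<mu> \<ge> 0"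
  shows "real (card V choose k) * \<mu> ^ k \<le> esym V k y"
proof -
  have "real (card {J. J \<subseteq> V \<and> card J = k}) * \<mu> ^ k \<le> esym V k y"
    unfolding esym_def
  proof (rule sum_bounded_below)
    fix J assume "J \<in> {J. J \<subseteq> V \<and> card J = k}"
    then have "(\<Prod>i\<in>J. \<mu>) \<le> (\<Prod>i\<in>J. y i)"
      using assms by (intro prod_mono) auto
    then show "\<mu> ^ k \<le> (\<Prod>i\<in>J. y i)"
      using \<open>J \<in> _\<close> by simp
  qed
  then show ?thesis
    using n_subsets[OF assms(1)] by simp
qed

lemma maclaurin_inequality:
  assumes "finite V" "\<And>i. i \<in> V \<Longrightarrow> y i \<ge> 0"
  shows "esym V k y \<le> real (card V choose k) * (sum y V / real (card V)) ^ k"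
  using assms
proof (induction V arbitrary: k rule: finite_induct)
  case empty
  then show ?case by (cases k) (simp_all add: esym_0, simp add: esym_def)
next
  case (insert v F)
  show ?case
  proof (cases k)
    case 0
    then show ?thesis using insert by (simp add: esym_0)
  next
    case (Suc j)
    define a where "a = sum y F / real (card F)"
    have "a \<ge> 0" "y v \<ge> 0"
      using insert by (simp_all add: a_def sum_nonneg)
    have sum_F: "sum y F = real (card F) * a"
      using insert.prems by (cases "card F = 0") (simp_all add: a_def sum_nonneg_eq_0_iff insert.hyps)
    have "esym (insert v F) k y = esym F (Suc j) y + y v * esym F j y"
      using insert.hyps Suc by (simp add: esym_insert)
    also have "\<dots> \<le> real (card F choose Suc j) * a ^ Suc j + y v * (real (card F choose j) * a ^ j)"
    proof (intro add_mono mult_left_mono \<open>y v \<ge> 0\<close>)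
      show "esym F (Suc j) y \<le> real (card F choose Suc j) * a ^ Suc j"
        "esym F j y \<le> real (card F choose j) * a ^ j"
        unfolding a_def by (rule insert.IH, use insert.prems in auto)+
    qed
    also have "\<dots> \<le> real (Suc (card F) choose Suc j) * ((real (card F) * a + y v) / real (Suc (card F))) ^ Suc j"
      by (rule maclaurin_step[OF \<open>a \<ge> 0\<close> \<open>y v \<ge> 0\<close>])
    also have "\<dots> = real (card (insert v F) choose k) * (sum y (insert v F) / real (card (insert v F))) ^ k"
      using insert.hyps Suc sum_F by (simp add: add.commute)
    finally show ?thesis .
  qed
qed

lemma esym_remove_le:
  assumes "finite V" "u \<in> V" "sum y V = 1" "\<And>i. i \<in> V \<Longrightarrow> \<mu> \<le> y i" "\<mu> \<ge> 0"
  shows "esym (V - {u}) (Suc k) y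
    \<le> real (card V choose Suc k) / real (card V) ^ Suc k - real ((card V - 1) choose k) * \<mu> ^ Suc k"
proof -
  have V: "V = insert u (V - {u})"
    using assms(2) by blast
  have "esym V (Suc k) y \<le> real (card V choose Suc k) * (sum y V / real (card V)) ^ Suc k"
    using assms by (intro maclaurin_inequality) (auto intro: order_trans)
  then have "esym V (Suc k) y \<le> real (card V choose Suc k) / real (card V) ^ Suc k"
    unfolding assms(3) power_one_over by simp
  moreover have "esym V (Suc k) y = esym (V - {u}) (Suc k) y + y u * esym (V - {u}) k y"
    using esym_insert[of "V - {u}" u k y] assms(1) V by simp
  moreover have "real ((card V - 1) choose k) * \<mu> ^ k \<le> esym (V - {u}) k y"
    using esym_ge_choose_mult_power[of "V - {u}" \<mu> y k] assms by simp
  then have "\<mu> * (real ((card V - 1) choose k) * \<mu> ^ k) \<le> y u * esym (V - {u}) k y"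
    using assms by (intro mult_mono) (auto intro: order_trans)
  ultimately show ?thesis
    by (simp add: power_one_over mult_ac)
qed

lemma num_copies_le_fact:
  assumes "finite I" "card I = s" "\<forall>e\<in>EQ. e \<subseteq> {..<s}"
  shows "num_copies s EQ I E \<le> fact s"
proof -
  let ?F = "{f \<in> {..<s} \<rightarrow>\<^sub>E I. inj_on f {..<s}}"
  have copies_sub: "{(V', E'). V' \<subseteq> I \<and> E' \<subseteq> E \<and> (\<forall>e\<in>E'. e \<subseteq> V') \<and>
      (\<exists>f. bij_betw f {..<s} V' \<and> E' = (\<lambda>e. f ` e) ` EQ)} \<subseteq> (\<lambda>f. (I, (\<lambda>e. f ` e) ` EQ)) ` ?F"
  proof clarify
    fix V' f
    assume "V' \<subseteq> I" "bij_betw f {..<s} V'"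
    then have "V' = I"
      using assms by (metis bij_betw_same_card card_lessThan card_subset_eq)
    then have "restrict f {..<s} \<in> ?F"
      using \<open>bij_betw f {..<s} V'\<close> by (auto simp: bij_betw_def)
    moreover have "(\<lambda>e. restrict f {..<s} ` e) ` EQ = (\<lambda>e. f ` e) ` EQ"
      using assms(3) by (intro image_cong refl) (auto simp: subset_eq)
    ultimately show "(V', (\<lambda>e. f ` e) ` EQ) \<in> (\<lambda>f. (I, (\<lambda>e. f ` e) ` EQ)) ` ?F"
      using \<open>V' = I\<close> by (metis (no_types, lifting) image_eqI)
  qed
  have "finite ?F"
    using assms by (simp add: finite_PiE)
  then have "num_copies s EQ I E \<le> card ?F"
    unfolding num_copies_def
    using card_mono[OF finite_imageI copies_sub] card_image_le by (meson order_trans)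
  also have "card ?F = fact s"
    using card_inj_on_subset_funcset[of "{..<s}" I "{..<s}"] assms by (simp add: fact_prod_rev)
  finally show ?thesis .
qed

definition Qcount :: "nat \<Rightarrow> nat set set \<Rightarrow> nat set set \<Rightarrow> nat set \<Rightarrow> real" where
  "Qcount s EQ EH I = real (num_copies s EQ I (induced_edges EH I))"

text \<open>s! times Qpartial s EQ n EH u x is the partial derivative of Qpoly s EQ n EH at x in x u.\<close>

definition Qpartial :: "nat \<Rightarrow> nat set set \<Rightarrow> nat \<Rightarrow> nat set set \<Rightarrow> nat \<Rightarrow> (nat \<Rightarrow> real) \<Rightarrow> real" where
  "Qpartial s EQ n EH u x =
     (\<Sum>I\<in>{I. I \<subseteq> {..<n} \<and> card I = s \<and> u \<in> I}. Qcount s EQ EH I * (\<Prod>i\<in>I - {u}. x i))"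

lemma Qpoly_eq_Qcount:
  "Qpoly s EQ n EH x = fact s * (\<Sum>I\<in>{I. I \<subseteq> {..<n} \<and> card I = s}. Qcount s EQ EH I * (\<Prod>i\<in>I. x i))"
  by (simp add: Qpoly_def Qcount_def)

lemma Qdegree_eq_Qcount:
  "real (Qdegree s EQ n EH u) = (\<Sum>I\<in>{I. I \<subseteq> {..<n} \<and> card I = s \<and> u \<in> I}. Qcount s EQ EH I)"
  by (simp add: Qdegree_def Qcount_def)

lemma Qpoly_nonneg:
  assumes "\<forall>i<n. 0 \<le> x i"
  shows "0 \<le> Qpoly s EQ n EH x"
  unfolding Qpoly_def using assms by (intro mult_nonneg_nonneg sum_nonneg prod_nonneg) auto

lemma Qpoly_fun_upd:
  "Qpoly s EQ n EH (x(u := t)) = Qpoly s EQ n EH (x(u := 0)) + fact s * Qpartial s EQ n EH u x * t"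
proof -
  let ?S = "{I. I \<subseteq> {..<n} \<and> card I = s}"
  let ?c = "Qcount s EQ EH"
  have finite_S: "finite ?S"
    by (rule finite_subset[of _ "Pow {..<n}"]) auto
  have split: "(\<Sum>I\<in>?S. ?c I * (\<Prod>i\<in>I. (x(u := t)) i))
      = Qpartial s EQ n EH u x * t + (\<Sum>I\<in>?S - {I. u \<in> I}. ?c I * (\<Prod>i\<in>I. x i))" for t
  proof -
    have "(\<Sum>I\<in>?S \<inter> {I. u \<in> I}. ?c I * (\<Prod>i\<in>I. (x(u := t)) i))
        = (\<Sum>I\<in>?S \<inter> {I. u \<in> I}. ?c I * (\<Prod>i\<in>I - {u}. x i) * t)"
    proof (intro sum.cong refl)
      fix I assume I: "I \<in> ?S \<inter> {I. u \<in> I}"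
      then have "finite I"
        using finite_subset by blast
      then have "(\<Prod>i\<in>I. (x(u := t)) i) = t * (\<Prod>i\<in>I - {u}. (x(u := t)) i)"
        using prod.remove[of I u "x(u := t)"] I by simp
      also have "(\<Prod>i\<in>I - {u}. (x(u := t)) i) = (\<Prod>i\<in>I - {u}. x i)"
        by (intro prod.cong) auto
      finally show "?c I * (\<Prod>i\<in>I. (x(u := t)) i) = ?c I * (\<Prod>i\<in>I - {u}. x i) * t"
        by simp
    qed
    also have "\<dots> = Qpartial s EQ n EH u x * t"
      unfolding Qpartial_def sum_distrib_right by (intro sum.cong) auto
    finally have containing_u: "(\<Sum>I\<in>?S \<inter> {I. u \<in> I}. ?c I * (\<Prod>i\<in>I. (x(u := t)) i))
        = Qpartial s EQ n EH u x * t" .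
    have avoiding_u: "(\<Sum>I\<in>?S - {I. u \<in> I}. ?c I * (\<Prod>i\<in>I. (x(u := t)) i))
        = (\<Sum>I\<in>?S - {I. u \<in> I}. ?c I * (\<Prod>i\<in>I. x i))"
    proof (intro sum.cong refl)
      fix I assume "I \<in> ?S - {I. u \<in> I}"
      then have "(\<Prod>i\<in>I. (x(u := t)) i) = (\<Prod>i\<in>I. x i)"
        by (intro prod.cong) auto
      then show "?c I * (\<Prod>i\<in>I. (x(u := t)) i) = ?c I * (\<Prod>i\<in>I. x i)"
        by simp
    qed
    show ?thesis
      by (simp only: sum.Int_Diff[OF finite_S, of _ "{I. u \<in> I}"] containing_u avoiding_u)
  qed
  show ?thesis
    unfolding Qpoly_eq_Qcount split by (simp add: algebra_simps)
qed

lemma Qpoly_divide: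
  fixes c :: real
  shows "Qpoly s EQ n EH (\<lambda>i. x i / c) = Qpoly s EQ n EH x / c ^ s"
proof -
  have "(\<Sum>I\<in>{I. I \<subseteq> {..<n} \<and> card I = s}. Qcount s EQ EH I * (\<Prod>i\<in>I. x i / c))
      = (\<Sum>I\<in>{I. I \<subseteq> {..<n} \<and> card I = s}. Qcount s EQ EH I * (\<Prod>i\<in>I. x i) / c ^ s)"
    by (intro sum.cong refl) (simp add: prod_dividef)
  then show ?thesis
    unfolding Qpoly_eq_Qcount by (simp flip: sum_divide_distrib)
qed

lemma pnorm_eq_1_iff:
  assumes "p > 0"
  shows "pnorm p n x = 1 \<longleftrightarrow> (\<Sum>i<n. \<bar>x i\<bar> powr p) = 1"
proof -
  define S where "S = (\<Sum>i<n. \<bar>x i\<bar> powr p)"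
  have "S \<ge> 0"
    by (simp add: S_def sum_nonneg)
  have "S powr (1 / p) = 1 \<longleftrightarrow> S = 1"
  proof
    assume "S powr (1 / p) = 1"
    then have "(S powr (1 / p)) powr p = 1" by simp
    then show "S = 1"
      using assms \<open>S \<ge> 0\<close> by (simp add: powr_powr)
  qed simp
  then show ?thesis
    by (simp add: pnorm_def S_def)
qed

lemma pnorm_divide:
  assumes "p > 0" "c > 0"
  shows "pnorm p n (\<lambda>i. x i / c) = pnorm p n x / c"
proof -
  have "(\<Sum>i<n. \<bar>x i / c\<bar> powr p) = (\<Sum>i<n. \<bar>x i\<bar> powr p) / c powr p"
    using assms by (simp add: powr_divide sum_divide_distrib)
  moreover have "(c powr p) powr (1 / p) = c"
    using assms by (simp add: powr_powr)
  ultimately show ?thesis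
    using assms by (simp add: pnorm_def powr_divide sum_nonneg)
qed

lemma bdd_above_Qpoly_sphere:
  assumes "p > 0"
  shows "bdd_above (Qpoly s EQ n EH ` {x. pnorm p n x = 1})"
proof (rule bdd_aboveI2)
  fix x assume "x \<in> {x. pnorm p n x = 1}"
  then have sum_1: "(\<Sum>i<n. \<bar>x i\<bar> powr p) = 1"
    using pnorm_eq_1_iff assms by auto
  have abs_le_1: "\<bar>x i\<bar> \<le> 1" if "i < n" for i
  proof -
    have "\<bar>x i\<bar> powr p \<le> 1"
      using member_le_sum[of i "{..<n}" "\<lambda>i. \<bar>x i\<bar> powr p"] that sum_1 by simp
    then show ?thesis
      using gr_one_powr[of "\<bar>x i\<bar>" p] assms by fastforce
  qed
  have "(\<Prod>i\<in>I. x i) \<le> 1" if "I \<subseteq> {..<n}" for I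
  proof -
    have "(\<Prod>i\<in>I. x i) \<le> (\<Prod>i\<in>I. \<bar>x i\<bar>)"
      by (metis abs_ge_self abs_prod)
    also have "\<dots> \<le> 1"
      using that abs_le_1 by (intro prod_le_1) auto
    finally show ?thesis .
  qed
  then show "Qpoly s EQ n EH x \<le> fact s * (\<Sum>I\<in>{I. I \<subseteq> {..<n} \<and> card I = s}. Qcount s EQ EH I)"
    unfolding Qpoly_eq_Qcount
    by (intro mult_left_mono sum_mono mult_left_le) (auto simp: Qcount_def)
qed

lemma Qpoly_le_Qlambda_pnorm:
  assumes "p > 0" "pnorm p n x > 0"
  shows "Qpoly s EQ n EH x \<le> Qlambda p s EQ n EH * pnorm p n x ^ s"
proof -
  have "pnorm p n (\<lambda>i. x i / pnorm p n x) = 1"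
    using pnorm_divide[OF assms] assms by simp
  then have "Qpoly s EQ n EH (\<lambda>i. x i / pnorm p n x) \<le> Qlambda p s EQ n EH"
    unfolding Qlambda_def using bdd_above_Qpoly_sphere[OF assms(1)] by (intro cSUP_upper) auto
  then show ?thesis
    using assms by (simp add: Qpoly_divide pos_divide_le_eq)
qed

lemma sum_powr_fun_upd:
  fixes x :: "nat \<Rightarrow> real"
  assumes "u < n"
  shows "(\<Sum>i<n. \<bar>(x(u := t)) i\<bar> powr p) = \<bar>t\<bar> powr p + (\<Sum>i\<in>{..<n} - {u}. \<bar>x i\<bar> powr p)"
proof -
  have "(\<Sum>i<n. \<bar>(x(u := t)) i\<bar> powr p)
      = \<bar>(x(u := t)) u\<bar> powr p + (\<Sum>i\<in>{..<n} - {u}. \<bar>(x(u := t)) i\<bar> powr p)"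
    using assms by (intro sum.remove) auto
  also have "(\<Sum>i\<in>{..<n} - {u}. \<bar>(x(u := t)) i\<bar> powr p) = (\<Sum>i\<in>{..<n} - {u}. \<bar>x i\<bar> powr p)"
    by (intro sum.cong) auto
  finally show ?thesis
    by simp
qed

lemma principal_Qeigvec_eigen_equation:
  assumes "p > 1" "s \<ge> 1" "principal_Qeigvec p s EQ n EH x" "u < n" "x u > 0"
  shows "Qlambda p s EQ n EH * x u powr (p - 1) = fact (s - 1) * Qpartial s EQ n EH u x"
proof -
  define lam where "lam = Qlambda p s EQ n EH"
  define D where "D = Qpartial s EQ n EH u x"
  define R where "R = (\<Sum>i\<in>{..<n} - {u}. \<bar>x i\<bar> powr p)"
  \<comment> \<open>By maximality of x, G is nonnegative on t > 0 and vanishes at x u, so G' (x u) = 0.\<close>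
  define G where "G t = lam * (R + t powr p) powr (real s / p) - (Qpoly s EQ n EH (x(u := 0)) + fact s * D * t)" for t
  have "R \<ge> 0"
    by (simp add: R_def sum_nonneg)
  have "(\<Sum>i<n. \<bar>x i\<bar> powr p) = 1"
    using assms(3) pnorm_eq_1_iff[of p n x] \<open>p > 1\<close> unfolding principal_Qeigvec_def by force
  then have "R + x u powr p = 1"
    using sum_powr_fun_upd[OF \<open>u < n\<close>, of x "x u" p] \<open>x u > 0\<close> by (simp add: R_def)
  have G_nonneg: "G t \<ge> 0" if "t > 0" for t
  proof -
    have pnorm_eq: "pnorm p n (x(u := t)) = (R + t powr p) powr (1 / p)"
      using sum_powr_fun_upd[OF \<open>u < n\<close>] that by (simp add: pnorm_def R_def add.commute)
    have "R + t powr p > 0"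
      using \<open>R \<ge> 0\<close> that by (simp add: add_nonneg_pos)
    then have "Qpoly s EQ n EH (x(u := t)) \<le> lam * pnorm p n (x(u := t)) ^ s"
      unfolding lam_def using assms(1) pnorm_eq by (intro Qpoly_le_Qlambda_pnorm) auto
    also have "pnorm p n (x(u := t)) ^ s = (R + t powr p) powr (real s / p)"
      using \<open>R + t powr p > 0\<close> by (simp add: pnorm_eq powr_realpow[symmetric] powr_powr)
    finally show ?thesis
      using Qpoly_fun_upd[of s EQ n EH x u t] unfolding G_def D_def by linarith
  qed
  have "G (x u) = 0"
    using assms(3) Qpoly_fun_upd[of s EQ n EH x u "x u"] \<open>R + x u powr p = 1\<close>
    by (simp add: G_def D_def lam_def principal_Qeigvec_def)
  have "(G has_real_derivative lam * real s * x u powr (p - 1) - fact s * D) (at (x u))"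
    unfolding G_def using \<open>x u > 0\<close> \<open>R \<ge> 0\<close> \<open>R + x u powr p = 1\<close> assms(1)
    by (auto intro!: derivative_eq_intros simp: add_nonneg_pos)
  then have "lam * real s * x u powr (p - 1) - fact s * D = 0"
  proof (rule DERIV_local_min[OF _ \<open>x u > 0\<close>], intro allI impI)
    fix t assume "\<bar>x u - t\<bar> < x u"
    then show "G (x u) \<le> G t"
      using G_nonneg \<open>G (x u) = 0\<close> by simp
  qed
  moreover have "fact s = real s * fact (s - 1)"
    using assms(2) by (simp add: fact_reduce)
  ultimately show ?thesis
    using assms(2) by (simp add: lam_def D_def)
qed

lemma Qpartial_powr_le_Qdegree_powr:
  assumes "p > 1" "\<forall>i<n. 0 \<le> x i"
  shows "Qpartial s EQ n EH u x powr p
    \<le> real (Qdegree s EQ n EH u) powr (p - 1) * Qpartial s EQ n EH u (\<lambda>i. x i powr p)"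
proof -
  let ?Iu = "{I. I \<subseteq> {..<n} \<and> card I = s \<and> u \<in> I}"
  have "finite ?Iu"
    by (rule finite_subset[of _ "Pow {..<n}"]) auto
  have "Qpartial s EQ n EH u (\<lambda>i. x i powr p) = (\<Sum>I\<in>?Iu. Qcount s EQ EH I * (\<Prod>i\<in>I - {u}. x i) powr p)"
    by (simp add: Qpartial_def prod_powr_distrib)
  moreover have "Qpartial s EQ n EH u x powr p
      \<le> (\<Sum>I\<in>?Iu. Qcount s EQ EH I) powr (p - 1) * (\<Sum>I\<in>?Iu. Qcount s EQ EH I * (\<Prod>i\<in>I - {u}. x i) powr p)"
    unfolding Qpartial_def using assms
    by (intro power_mean_inequality \<open>finite ?Iu\<close>) (auto simp: Qcount_def intro!: prod_nonneg)
  ultimately show ?thesis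
    by (simp add: Qdegree_eq_Qcount)
qed

lemma Qpartial_le:
  assumes "2 \<le> s" "u < n" "\<forall>e\<in>EQ. e \<subseteq> {..<s}"
    and "(\<Sum>i<n. y i) = 1" "\<And>i. i < n \<Longrightarrow> \<mu> \<le> y i" "\<mu> \<ge> 0"
  shows "Qpartial s EQ n EH u y
    \<le> fact s * real (n choose (s - 1)) / real n ^ (s - 1)
      - (fact s * real (n choose (s - 1)) - real (Qdegree s EQ n EH u)) * \<mu> ^ (s - 1)"
proof -
  \<comment> \<open>Compare each Qcount with s!; the deficit is weighted by products of at least mu^(s-1).\<close>
  obtain k where s: "s = Suc (Suc k)"
    using assms(1) by (metis add_2_eq_Suc le_iff_add)
  let ?Iu = "{I. I \<subseteq> {..<n} \<and> card I = s \<and> u \<in> I}"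
  let ?Js = "{J. J \<subseteq> {..<n} - {u} \<and> card J = Suc k}"
  let ?c = "Qcount s EQ EH"
  define P where "P I = (\<Prod>i\<in>I - {u}. y i)" for I
  have "finite ?Iu"
    by (rule finite_subset[of _ "Pow {..<n}"]) auto
  have c_le: "?c I \<le> fact s" if "I \<in> ?Iu" for I
  proof -
    have "num_copies s EQ I (induced_edges EH I) \<le> fact s"
      using num_copies_le_fact[of I s EQ] that assms(3) finite_subset[of I "{..<n}"] by simp
    then show ?thesis
      unfolding Qcount_def by (metis of_nat_fact of_nat_le_iff)
  qed
  have P_ge: "\<mu> ^ Suc k \<le> P I" if "I \<in> ?Iu" for I
  proof -
    have "finite I" using that finite_subset by blast
    then have "card (I - {u}) = Suc k" using that s by simp
    moreover have "(\<Prod>i\<in>I - {u}. \<mu>) \<le> P I"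
      unfolding P_def using that assms(5,6) by (intro prod_mono) auto
    ultimately show ?thesis by simp
  qed
  have "(\<Sum>I\<in>?Iu. P I) = (\<Sum>J\<in>?Js. P (insert u J))"
    using sum_subsets_containing[of "{..<n}" u P "Suc k"] assms(2) s by simp
  also have "\<dots> = esym ({..<n} - {u}) (Suc k) y"
    unfolding esym_def P_def by (intro sum.cong refl) (auto intro!: prod.cong)
  finally have sum_P: "(\<Sum>I\<in>?Iu. P I) = esym ({..<n} - {u}) (Suc k) y" .
  have "card ?Iu = card ?Js"
    using bij_betw_same_card[OF bij_betw_insert_subsets[of "{..<n}" u "Suc k"]] assms(2) s by simp
  then have card_Iu: "card ?Iu = (n - 1) choose Suc k"
    using n_subsets[of "{..<n} - {u}" "Suc k"] assms(2) by simp
  have "(\<Sum>I\<in>?Iu. (fact s - ?c I) * \<mu> ^ Suc k) \<le> (\<Sum>I\<in>?Iu. (fact s - ?c I) * P I)"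
    using c_le P_ge by (intro sum_mono mult_left_mono) auto
  moreover have "(\<Sum>I\<in>?Iu. (fact s - ?c I) * \<mu> ^ Suc k)
      = (fact s * real (card ?Iu) - real (Qdegree s EQ n EH u)) * \<mu> ^ Suc k"
    by (simp add: Qdegree_eq_Qcount sum_subtractf left_diff_distrib sum_distrib_right)
  moreover have "(\<Sum>I\<in>?Iu. (fact s - ?c I) * P I) = fact s * esym ({..<n} - {u}) (Suc k) y - Qpartial s EQ n EH u y"
    by (simp add: Qpartial_def P_def sum_P[symmetric] sum_subtractf left_diff_distrib sum_distrib_left)
  ultimately have "Qpartial s EQ n EH u y
      \<le> fact s * esym ({..<n} - {u}) (Suc k) y - (fact s * real (card ?Iu) - real (Qdegree s EQ n EH u)) * \<mu> ^ Suc k"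
    by linarith
  moreover have "fact s * esym ({..<n} - {u}) (Suc k) y
      \<le> fact s * (real (n choose Suc k) / real n ^ Suc k - real ((n - 1) choose k) * \<mu> ^ Suc k)"
    using esym_remove_le[of "{..<n}" u y \<mu> k] assms by (intro mult_left_mono) simp_all
  moreover have "real (n choose Suc k) = real ((n - 1) choose Suc k) + real ((n - 1) choose k)"
    using assms(2) by (cases n) auto
  moreover have "s - 1 = Suc k"
    using s by simp
  ultimately show ?thesis
    using card_Iu by (simp add: algebra_simps)
qed

lemma Qpartial_powr_upper_bound:
  assumes "p > 1" "2 \<le> s" "u < n" "\<forall>e\<in>EQ. e \<subseteq> {..<s}"
    and "\<forall>i<n. 0 \<le> x i" "(\<Sum>i<n. x i powr p) = 1" "\<And>i. i < n \<Longrightarrow> m \<le> x i" "m \<ge> 0"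
  shows "Qpartial s EQ n EH u x powr p
    \<le> fact s * real (n choose (s - 1)) * real (Qdegree s EQ n EH u) powr (p - 1) / real n ^ (s - 1)
      - (fact s * real (n choose (s - 1)) * real (Qdegree s EQ n EH u) powr (p - 1)
         - real (Qdegree s EQ n EH u) powr p) * m powr (p * (real s - 1))"
proof -
  define d where "d = real (Qdegree s EQ n EH u)"
  have "m powr p \<le> x i powr p" if "i < n" for i
    using assms(1,7,8) that by (intro powr_mono2) auto
  then have "Qpartial s EQ n EH u (\<lambda>i. x i powr p)
      \<le> fact s * real (n choose (s - 1)) / real n ^ (s - 1) - (fact s * real (n choose (s - 1)) - d) * (m powr p) ^ (s - 1)"
    using Qpartial_le[OF assms(2-4,6)] d_def by simp
  then have "Qpartial s EQ n EH u x powr p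
      \<le> d powr (p - 1) * (fact s * real (n choose (s - 1)) / real n ^ (s - 1) - (fact s * real (n choose (s - 1)) - d) * (m powr p) ^ (s - 1))"
    using Qpartial_powr_le_Qdegree_powr[OF assms(1,5), of s EQ EH u] d_def
    by (meson mult_left_mono order_trans powr_ge_zero)
  moreover have "(m powr p) ^ (s - 1) = m powr (p * (real s - 1))"
    using assms(2,8) by (cases "m = 0") (simp_all add: powr_realpow[symmetric] powr_powr of_nat_diff)
  moreover have "d powr p = d * d powr (p - 1)"
    using powr_diff_one_mult[of d p] by (simp add: d_def mult.commute)
  ultimately show ?thesis
    by (simp add: algebra_simps d_def[symmetric])
qed

lemma principal_Qeigvec_Qdegree_bound:
  assumes "p > 1" "2 \<le> s" "\<forall>e\<in>EQ. e \<subseteq> {..<s}" "principal_Qeigvec p s EQ n EH x" "u < n"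
  shows "(Qlambda p s EQ n EH * Min (x ` {..<n}) powr (p - 1) / fact (s - 1)) powr p
    \<le> fact s * real (n choose (s - 1)) * real (Qdegree s EQ n EH u) powr (p - 1) / real n ^ (s - 1)
      - (fact s * real (n choose (s - 1)) * real (Qdegree s EQ n EH u) powr (p - 1)
         - real (Qdegree s EQ n EH u) powr p) * Min (x ` {..<n}) powr (p * (real s - 1))"
proof -
  define lam where "lam = Qlambda p s EQ n EH"
  define m where "m = Min (x ` {..<n})"
  have x_nonneg: "\<forall>i<n. 0 \<le> x i" and "(\<Sum>i<n. \<bar>x i\<bar> powr p) = 1" and "Qpoly s EQ n EH x = lam"
    using assms(1,4) pnorm_eq_1_iff[of p n x] by (auto simp: principal_Qeigvec_def lam_def)
  then have sum_1: "(\<Sum>i<n. x i powr p) = 1"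
    by simp
  have m_le: "m \<le> x i" if "i < n" for i
    using that by (simp add: m_def)
  have "m \<in> x ` {..<n}"
    unfolding m_def using \<open>u < n\<close> by (intro Min_in) auto
  then have "m \<ge> 0"
    using x_nonneg by auto
  show ?thesis
  proof (cases "m = 0")
    case True
    then show ?thesis
      using assms(1) by (simp add: m_def[symmetric])
  next
    case False
    then have "x u > 0"
      using m_le[OF \<open>u < n\<close>] \<open>m \<ge> 0\<close> by simp
    have "lam \<ge> 0"
      using Qpoly_nonneg[OF x_nonneg, of s EQ EH] \<open>Qpoly s EQ n EH x = lam\<close> by simp
    have "lam * m powr (p - 1) / fact (s - 1) \<le> lam * x u powr (p - 1) / fact (s - 1)"
      using \<open>lam \<ge> 0\<close> \<open>m \<ge> 0\<close> m_le[OF \<open>u < n\<close>] assms(1)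
      by (intro divide_right_mono mult_left_mono powr_mono2) auto
    also have "\<dots> = Qpartial s EQ n EH u x"
      using principal_Qeigvec_eigen_equation[OF assms(1) _ assms(4,5) \<open>x u > 0\<close>] assms(2)
      by (simp add: lam_def)
    finally have "(lam * m powr (p - 1) / fact (s - 1)) powr p \<le> Qpartial s EQ n EH u x powr p"
      using \<open>lam \<ge> 0\<close> \<open>m \<ge> 0\<close> assms(1) by (intro powr_mono2) auto
    then show ?thesis
      using Qpartial_powr_upper_bound[OF assms(1,2,5,3) x_nonneg sum_1 m_le \<open>m \<ge> 0\<close>, of EH]
      unfolding lam_def m_def by linarith
  qed
qed

theorem lemma3p6:
  fixes p :: real and r s n :: nat and EQ EH :: "nat set set" and x :: "nat \<Rightarrow> real"
  assumes "p > 1" and "2 \<le> r" and "r \<le> s" and "s \<le> n"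
    and "is_rgraph r {..<s} EQ" and "is_rgraph r {..<n} EH"
    and "principal_Qeigvec p s EQ n EH x"
  shows "(Qlambda p s EQ n EH * (Min (x ` {..<n})) powr (p - 1) / fact (s - 1)) powr p
     \<le> fact s * real (n choose (s - 1)) * real (min_Qdegree s EQ n EH) powr (p - 1) / real n ^ (s - 1)
        - (fact s * real (n choose (s - 1)) * real (min_Qdegree s EQ n EH) powr (p - 1)
           - real (min_Qdegree s EQ n EH) powr p) * (Min (x ` {..<n})) powr (p * (real s - 1))"
proof -
  have "2 \<le> s" "0 < n"
    using assms(2-4) by linarith+
  have "\<forall>e\<in>EQ. e \<subseteq> {..<s}"
    using assms(5) by (simp add: is_rgraph_def)
  have "min_Qdegree s EQ n EH \<in> Qdegree s EQ n EH ` {..<n}"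
    unfolding min_Qdegree_def using \<open>0 < n\<close> by (intro Min_in) auto
  then obtain u where "u < n" "Qdegree s EQ n EH u = min_Qdegree s EQ n EH"
    by auto
  then show ?thesis
    using principal_Qeigvec_Qdegree_bound[OF assms(1) \<open>2 \<le> s\<close> \<open>\<forall>e\<in>EQ. e \<subseteq> {..<s}\<close> assms(7)]
    by metis
qed

end
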